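(* There is no novel partition of length $3$.
   Context: An integer partition is $\lambda=(\lambda_1,\dots,\lambda_k)$ with integers $\lambda_1\ge\dots\ge\lambda_k\ge 1$; $k$ is its length. For $v\in\mathbb{Z}^k$ let $v^{\perp B}=\{x\in\{-1,1\}^k: v\cdot x=0\}$; $\lambda^{\perp B}$ is this set for $(\lambda_1,\dots,\lambda_k)$. $V_\lambda\subset\mathbb{Z}^k$ is the set of vectors obtained from $(\lambda_1,\dots,\lambda_k)$ by permuting coordinates and changing signs of some coordinates, with first coordinate positive. For $I\subset\{1,\dots,m\}$, $\mathrm{Proj}_I:\{-1,1\}^m\to\{-1,1\}^{|I|}$ keeps the coordinates indexed by $I$. Reduction: for partitions $\mu$ of length $m$ and $\lambda$ of length $k\le m$, $\mu\Rightarrow\lambda$ iff there exist $I\subset\{1,\dots,m\}$, $|I|=k$, and $v\in V_\lambda$ with $\mathrm{Proj}_I(\mu^{\perp B})\subset v^{\perp B}$. $\mu$ strictly reduces to $\lambda$ iff $\mu\Rightarrow\lambda$ and not $\lambda\Rightarrow\mu$. Partitions $\lambda,\mu$ of the same length are equivalent iff there is $w\in V_\mu$ with $\lambda^{\perp B}=w^{\perp B}$. A partition $\lambda$ is novel iff $\lambda^{\perp B}\neq\emptyset$, $\lambda$ strictly reduces to no partition, and $\lambda$ is lexicographically smallest among partitions equivalent to it. *)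

theory Defs
  imports Main "HOL-Library.Multiset"
begin

text \<open>Vectors in Z^k are int lists of length k; coordinates are 0-indexed.\<close>

definition is_partition :: "int list \<Rightarrow> bool" where
  "is_partition lam \<longleftrightarrow> sorted_wrt (\<ge>) lam \<and> (\<forall>x\<in>set lam. x \<ge> 1)"

definition dotp :: "int list \<Rightarrow> int list \<Rightarrow> int" where
  "dotp v x = (\<Sum>i<length v. v ! i * x ! i)"

definition perpB :: "int list \<Rightarrow> int list set" where
  "perpB v = {x. length x = length v \<and> set x \<subseteq> {-1, 1} \<and> dotp v x = 0}"

definition Vset :: "int list \<Rightarrow> int list set" where
  "Vset lam = {v. \<exists>s p. length s = length lam \<and> set s \<subseteq> {-1, 1} \<and>
                     mset p = mset lam \<and> v = map2 (*) s p \<and> v \<noteq> [] \<and> hd v > 0}"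

definition Proj :: "nat set \<Rightarrow> int list \<Rightarrow> int list" where
  "Proj I x = nths x I"

definition reduces :: "int list \<Rightarrow> int list \<Rightarrow> bool" where
  "reduces mu lam \<longleftrightarrow> length lam \<le> length mu \<and>
     (\<exists>I v. I \<subseteq> {..<length mu} \<and> card I = length lam \<and> v \<in> Vset lam \<and>
            Proj I ` perpB mu \<subseteq> perpB v)"

definition strictly_reduces :: "int list \<Rightarrow> int list \<Rightarrow> bool" where
  "strictly_reduces mu lam \<longleftrightarrow> reduces mu lam \<and> \<not> reduces lam mu"

definition equivalent :: "int list \<Rightarrow> int list \<Rightarrow> bool" where
  "equivalent lam mu \<longleftrightarrow> length lam = length mu \<and> (\<exists>w\<in>Vset mu. perpB lam = perpB w)"

definition lex_le :: "int list \<Rightarrow> int list \<Rightarrow> bool" where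
  "lex_le a b \<longleftrightarrow> a = b \<or> (a, b) \<in> lexord {(x, y). x < y}"

definition novel :: "int list \<Rightarrow> bool" where
  "novel lam \<longleftrightarrow> is_partition lam \<and> perpB lam \<noteq> {} \<and>
     (\<forall>mu. is_partition mu \<longrightarrow> \<not> strictly_reduces lam mu) \<and>
     (\<forall>mu. is_partition mu \<and> equivalent mu lam \<longrightarrow> lex_le lam mu)"

end

theory Submission
  imports Defs
begin

text \<open>
  Let \<open>\<lambda> = (a, b, c)\<close> be a partition, so \<open>a \<ge> b \<ge> c \<ge> 1\<close>.
  If \<open>a x\<^sub>0 + b x\<^sub>1 + c x\<^sub>2 = 0\<close> for signs \<open>x\<^sub>i \<in> {-1, 1}\<close>, then \<open>x\<^sub>1 = x\<^sub>2\<close>: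
  otherwise \<open>a = |b - c| < a\<close>. Hence projecting \<open>\<lambda>\<^sup>\<perp>\<^sup>B\<close> onto the last two
  coordinates lands in \<open>(1, -1)\<^sup>\<perp>\<^sup>B\<close>, and \<open>(1, -1)\<close> is a signed permutation of the
  partition \<open>(1, 1)\<close>; so \<open>\<lambda>\<close> reduces to \<open>(1, 1)\<close>. The converse reduction is
  impossible because a partition never reduces to a longer one, so the reduction
  is strict and \<open>\<lambda>\<close> is not novel.
\<close>

lemma length_3_cases:
  assumes "length l = 3"
  obtains a b c where "l = [a, b, c]"
  using assms by (cases l; cases "tl l"; cases "tl (tl l)") auto

lemma dotp_2: "dotp [a, b] [x, y] = a * x + b * y"
  by (simp add: dotp_def numeral_2_eq_2 lessThan_Suc)

lemma dotp_3: "dotp [a, b, c] [x, y, z] = a * x + b * y + c * z"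
  by (simp add: dotp_def numeral_3_eq_3 lessThan_Suc)

lemma reduces_length: "reduces mu lam \<Longrightarrow> length lam \<le> length mu"
  by (simp add: reduces_def)

lemma reduces_shorter_strictly:
  assumes "reduces mu lam" and "length lam < length mu"
  shows "strictly_reduces mu lam"
  using assms reduces_length by (fastforce simp: strictly_reduces_def)

lemma novel_no_strict_reduction:
  assumes "novel lam" and "is_partition mu"
  shows "\<not> strictly_reduces lam mu"
  using assms by (simp add: novel_def)

lemma one_minus_one_in_Vset: "[1, -1] \<in> Vset [1, 1]"
  unfolding Vset_def
  by (rule CollectI, rule exI[of _ "[1, -1]"], rule exI[of _ "[1, 1]"]) auto

lemma perpB_one_minus_one: "s \<in> {-1, 1} \<Longrightarrow> [s, s] \<in> perpB [1, -1]"
  by (auto simp: perpB_def dotp_2)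

text \<open>The key sign lemma: a sign vector orthogonal to a partition of length three
  has equal last two coordinates, since \<open>b - c\<close> and \<open>c - b\<close> are smaller than \<open>a\<close>
  in absolute value.\<close>

lemma orthogonal_signs_last_equal:
  assumes "is_partition [a, b, c]" and "[x, y, z] \<in> perpB [a, b, c]"
  shows "y = z" and "y \<in> {-1, 1}"
proof -
  have order: "a \<ge> b" "b \<ge> c" "c \<ge> 1"
    using assms(1) by (auto simp: is_partition_def)
  have signs: "x \<in> {-1, 1}" "y \<in> {-1, 1}" "z \<in> {-1, 1}"
    and sum: "a * x + b * y + c * z = 0"
    using assms(2) by (auto simp: perpB_def dotp_3)
  show "y \<in> {-1, 1}" by (fact signs(2))
  show "y = z" using signs sum order by auto
qed

lemma projection_last_two:
  assumes "is_partition [a, b, c]"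
  shows "Proj {1, 2} ` perpB [a, b, c] \<subseteq> perpB [1, -1]"
proof
  fix w assume "w \<in> Proj {1, 2} ` perpB [a, b, c]"
  then obtain u where u: "u \<in> perpB [a, b, c]" and w: "w = Proj {1, 2} u" by auto
  from u have "length u = 3" by (simp add: perpB_def)
  then obtain x y z where u_eq: "u = [x, y, z]" by (rule length_3_cases)
  have "w = [y, z]" using w u_eq by (simp add: Proj_def nths_Cons)
  with orthogonal_signs_last_equal[OF assms u[unfolded u_eq]]
  show "w \<in> perpB [1, -1]" by (simp add: perpB_one_minus_one)
qed

lemma length_3_strictly_reduces:
  assumes "is_partition [a, b, c]"
  shows "strictly_reduces [a, b, c] [1, 1]"
proof (rule reduces_shorter_strictly)
  show "reduces [a, b, c] [1, 1]"
    unfolding reduces_def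
    using one_minus_one_in_Vset projection_last_two[OF assms]
    by (intro conjI exI[of _ "{1, 2}"] exI[of _ "[1, -1]"]) auto
qed simp

theorem mainTheorem7:
  shows "\<not> (\<exists>lam. is_partition lam \<and> length lam = 3 \<and> novel lam)"
proof
  assume "\<exists>lam. is_partition lam \<and> length lam = 3 \<and> novel lam"
  then obtain lam where part: "is_partition lam" and len: "length lam = 3"
    and nov: "novel lam" by blast
  obtain a b c where lam: "lam = [a, b, c]" using len by (rule length_3_cases)
  have "strictly_reduces lam [1, 1]"
    using length_3_strictly_reduces part lam by simp
  moreover have "is_partition [1, 1]" by (simp add: is_partition_def)
  ultimately show False using novel_no_strict_reduction[OF nov] by blast
qed

end
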